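(* Let $X$ be a binary random variable taking values in $\{x_1,x_2\}\subset\mathbb{R}$ with $\mathbb{E}[X]=0$, let $U$ be a random variable on a finite alphabet $\mathcal{U}$ jointly distributed with $X$, and let $\epsilon\ge0$ be such that $\|P_{X|U=u}-P_X\|_1\le\epsilon$ for all $u\in\mathcal{U}$. Then $\mathrm{MMSE}(X|U)\ge\mathrm{Var}(X)-\frac14\epsilon^2(x_1-x_2)^2$. Furthermore, $\mathrm{Var}(X)\le\frac14(x_1-x_2)^2$, and if $x_1=-x_2$ then $\mathrm{Var}(X)=\frac14(x_1-x_2)^2$.
   Context: $\mathrm{MMSE}(X|U)=\sum_u P_U(u)\left(\mathbb{E}(X^2|U=u)-(\mathbb{E}(X|U=u))^2\right)$. $\|\cdot\|_1$ is the $\ell_1$ norm. *)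

theory Defs
  imports "HOL-Probability.Probability"
begin

definition marg_U :: "('u \<times> real) pmf \<Rightarrow> 'u pmf" where
  "marg_U J = map_pmf fst J"

definition marg_X :: "('u \<times> real) pmf \<Rightarrow> real pmf" where
  "marg_X J = map_pmf snd J"

text \<open>Conditional distribution of X given U = u (meaningful when P_U(u) > 0).\<close>
definition cond_X :: "('u \<times> real) pmf \<Rightarrow> 'u \<Rightarrow> real pmf" where
  "cond_X J u = map_pmf snd (cond_pmf J {p. fst p = u})"

definition l1_dist :: "'a pmf \<Rightarrow> 'a pmf \<Rightarrow> real" where
  "l1_dist p q = (\<Sum>x\<in>set_pmf p \<union> set_pmf q. \<bar>pmf p x - pmf q x\<bar>)"

definition MMSE :: "('u::finite \<times> real) pmf \<Rightarrow> real" where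
  "MMSE J = (\<Sum>u\<in>UNIV. pmf (marg_U J) u *
      (measure_pmf.expectation (cond_X J u) (\<lambda>x. x\<^sup>2)
       - (measure_pmf.expectation (cond_X J u) (\<lambda>x. x))\<^sup>2))"

end

theory Submission
  imports Defs
begin

text \<open>
  By the law of total variance, \<open>MMSE(X|U) = Var(X) - \<Sum>\<^sub>u P\<^sub>U(u) (E[X|U=u] - E[X])\<^sup>2\<close>.
  Every conditional mean is close to the mean: for distributions on \<open>{x\<^sub>1, x\<^sub>2}\<close>,
  centring at the midpoint \<open>c = (x\<^sub>1 + x\<^sub>2)/2\<close> gives
  \<open>|E[X|U=u] - E[X]| \<le> \<parallel>P\<^sub>X\<^sub>|\<^sub>U\<^sub>=\<^sub>u - P\<^sub>X\<parallel>\<^sub>1 |x\<^sub>1 - x\<^sub>2|/2 \<le> \<epsilon> |x\<^sub>1 - x\<^sub>2|/2\<close>,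
  which bounds the subtracted term by \<open>\<epsilon>\<^sup>2 (x\<^sub>1 - x\<^sub>2)\<^sup>2/4\<close>.
  For the variance, \<open>(X - x\<^sub>1)(X - x\<^sub>2) = 0\<close> almost surely yields
  \<open>Var(X) = (x\<^sub>1 - x\<^sub>2)\<^sup>2/4 - (E[X] - c)\<^sup>2\<close>.
\<close>

lemma variance_two_point:
  fixes p :: "real pmf"
  assumes "set_pmf p \<subseteq> {x1, x2}"
  shows "measure_pmf.variance p (\<lambda>x. x)
    = 1/4 * (x1 - x2)\<^sup>2 - (measure_pmf.expectation p (\<lambda>x. x) - (x1 + x2) / 2)\<^sup>2"
proof -
  let ?m = "measure_pmf.expectation p (\<lambda>x. x)"
  have fin: "finite (set_pmf p)"
    using assms finite_subset by blast
  have "measure_pmf.expectation p (\<lambda>x. x\<^sup>2)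
      = measure_pmf.expectation p (\<lambda>x. (x1 + x2) * x - x1 * x2)"
    using assms by (intro integral_cong_AE)
      (auto simp: AE_measure_pmf_iff power2_eq_square algebra_simps dest!: subsetD)
  also have "\<dots> = (x1 + x2) * ?m - x1 * x2"
    using fin by (simp add: integrable_measure_pmf_finite measure_pmf.prob_space)
  finally have second_moment: "measure_pmf.expectation p (\<lambda>x. x\<^sup>2) = (x1 + x2) * ?m - x1 * x2" .
  have "measure_pmf.variance p (\<lambda>x. x) = measure_pmf.expectation p (\<lambda>x. x\<^sup>2) - ?m\<^sup>2"
    using fin by (simp add: integrable_measure_pmf_finite measure_pmf.variance_eq)
  also have "\<dots> = 1/4 * (x1 - x2)\<^sup>2 - (?m - (x1 + x2) / 2)\<^sup>2"
    unfolding second_moment by (simp add: power2_eq_square algebra_simps)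
  finally show ?thesis .
qed

lemma abs_expectation_diff_le_l1_dist:
  fixes p q :: "real pmf"
  assumes fin: "finite (set_pmf p)" "finite (set_pmf q)"
    and radius: "\<And>x. x \<in> set_pmf p \<union> set_pmf q \<Longrightarrow> \<bar>x - c\<bar> \<le> r"
  shows "\<bar>measure_pmf.expectation q (\<lambda>x. x) - measure_pmf.expectation p (\<lambda>x. x)\<bar>
    \<le> r * l1_dist q p"
proof -
  define S where "S = set_pmf q \<union> set_pmf p"
  have "finite S"
    using fin by (simp add: S_def)
  have expectation_eq: "measure_pmf.expectation M (\<lambda>x. x) = (\<Sum>x\<in>S. x * pmf M x)"
    if "set_pmf M \<subseteq> S" for M
    using \<open>finite S\<close> that by (intro integral_measure_pmf_real) auto
  have total_mass: "(\<Sum>x\<in>S. c * pmf q x) = (\<Sum>x\<in>S. c * pmf p x)"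
    using \<open>finite S\<close> by (simp add: S_def sum_pmf_eq_1 flip: sum_distrib_left)
  \<comment> \<open>\<open>q - p\<close> has total mass zero, so the sum may be centred at \<open>c\<close>\<close>
  have "measure_pmf.expectation q (\<lambda>x. x) - measure_pmf.expectation p (\<lambda>x. x)
      = (\<Sum>x\<in>S. (x - c) * (pmf q x - pmf p x))"
    using total_mass
    by (simp add: expectation_eq S_def sum_subtractf sum_distrib_left left_diff_distrib
        right_diff_distrib)
  also have "\<bar>\<dots>\<bar> \<le> (\<Sum>x\<in>S. \<bar>x - c\<bar> * \<bar>pmf q x - pmf p x\<bar>)"
    unfolding abs_mult[symmetric] by (rule sum_abs)
  also have "\<dots> \<le> (\<Sum>x\<in>S. r * \<bar>pmf q x - pmf p x\<bar>)"
    using radius by (intro sum_mono mult_right_mono) (auto simp: S_def)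
  also have "\<dots> = r * l1_dist q p"
    by (simp add: l1_dist_def S_def sum_distrib_left)
  finally show ?thesis .
qed

lemma abs_expectation_diff_le_l1_dist_two_point:
  fixes p q :: "real pmf"
  assumes "set_pmf p \<subseteq> {x1, x2}" "set_pmf q \<subseteq> {x1, x2}"
  shows "\<bar>measure_pmf.expectation q (\<lambda>x. x) - measure_pmf.expectation p (\<lambda>x. x)\<bar>
    \<le> \<bar>x1 - x2\<bar> / 2 * l1_dist q p"
proof (rule abs_expectation_diff_le_l1_dist)
  show "finite (set_pmf p)" "finite (set_pmf q)"
    using assms finite_subset by blast+
  show "\<bar>x - (x1 + x2) / 2\<bar> \<le> \<bar>x1 - x2\<bar> / 2" if "x \<in> set_pmf p \<union> set_pmf q" for x
    using that assms by (auto simp: abs_if field_simps)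
qed

text \<open>\<open>cond_pmf\<close> is unspecified on a null event, hence the hypothesis \<open>P\<^sub>U(u) > 0\<close>.\<close>

lemma set_pmf_cond_X:
  assumes "u \<in> set_pmf (marg_U J)"
  shows "set_pmf (cond_X J u) = snd ` (set_pmf J \<inter> {p. fst p = u})"
proof -
  have "set_pmf J \<inter> {p. fst p = u} \<noteq> {}"
    using assms by (auto simp: marg_U_def)
  then show ?thesis
    by (simp add: cond_X_def set_cond_pmf)
qed

lemma set_pmf_cond_X_subset:
  assumes "u \<in> set_pmf (marg_U J)"
  shows "set_pmf (cond_X J u) \<subseteq> set_pmf (marg_X J)"
  using assms by (auto simp: set_pmf_cond_X marg_X_def)

lemma pmf_marg_U_mult_cond_expectation:
  assumes fin: "finite (set_pmf (marg_X J))"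
  shows "pmf (marg_U J) u * measure_pmf.expectation (cond_X J u) f
    = (\<Sum>x\<in>set_pmf (marg_X J). f x * pmf J (u, x))"
proof (cases "u \<in> set_pmf (marg_U J)")
  case False
  then have "pmf J (u, x) = 0" for x
    by (force simp: marg_U_def pmf_eq_0_set_pmf)
  with False show ?thesis
    by (simp add: set_pmf_iff)
next
  case True
  define S where "S = {p :: _ \<times> real. fst p = u}"
  have ne: "set_pmf J \<inter> S \<noteq> {}"
    using True by (auto simp: marg_U_def S_def)
  have mass: "measure J S = pmf (marg_U J) u"
    by (simp add: marg_U_def pmf_map S_def vimage_def)
  have "measure_pmf.expectation (cond_X J u) f
      = measure_pmf.expectation (cond_pmf J S) (\<lambda>p. f (snd p))"
    by (simp add: cond_X_def S_def)
  also have "\<dots> = (\<Sum>p\<in>{u} \<times> set_pmf (marg_X J). f (snd p) * pmf (cond_pmf J S) p)"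
    using fin ne by (intro integral_measure_pmf_real) (force simp: S_def marg_X_def)+
  also have "\<dots> = (\<Sum>x\<in>set_pmf (marg_X J). f x * (pmf J (u, x) / pmf (marg_U J) u))"
    using pmf_cond[OF ne] mass by (simp add: sum.cartesian_product' S_def)
  finally show ?thesis
    using True by (simp add: sum_distrib_left set_pmf_iff)
qed

lemma sum_marg_U_cond_expectation:
  fixes J :: "('u::finite \<times> real) pmf"
  assumes fin: "finite (set_pmf (marg_X J))"
  shows "(\<Sum>u\<in>UNIV. pmf (marg_U J) u * measure_pmf.expectation (cond_X J u) f)
    = measure_pmf.expectation (marg_X J) f"
proof -
  have "measure_pmf.expectation (marg_X J) f = measure_pmf.expectation J (\<lambda>p. f (snd p))"
    by (simp add: marg_X_def)
  also have "\<dots> = (\<Sum>p\<in>UNIV \<times> set_pmf (marg_X J). f (snd p) * pmf J p)"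
    using fin by (intro integral_measure_pmf_real) (force simp: marg_X_def)+
  also have "\<dots> = (\<Sum>u\<in>UNIV. \<Sum>x\<in>set_pmf (marg_X J). f x * pmf J (u, x))"
    by (simp add: sum.cartesian_product')
  finally show ?thesis
    by (simp add: pmf_marg_U_mult_cond_expectation[OF fin])
qed

lemma MMSE_eq_variance_minus_variance_of_cond_mean:
  fixes J :: "('u::finite \<times> real) pmf"
  assumes fin: "finite (set_pmf (marg_X J))"
  shows "MMSE J = measure_pmf.variance (marg_X J) (\<lambda>x. x)
    - (\<Sum>u\<in>UNIV. pmf (marg_U J) u
        * (measure_pmf.expectation (cond_X J u) (\<lambda>x. x)
           - measure_pmf.expectation (marg_X J) (\<lambda>x. x))\<^sup>2)"
proof -
  define P where "P u = pmf (marg_U J) u" for u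
  define m where "m u = measure_pmf.expectation (cond_X J u) (\<lambda>x. x)" for u
  define \<mu> where "\<mu> = measure_pmf.expectation (marg_X J) (\<lambda>x. x)"
  have total_mass: "(\<Sum>u\<in>UNIV. P u) = 1"
    unfolding P_def by (rule sum_pmf_eq_1) auto
  have total_mean: "(\<Sum>u\<in>UNIV. P u * m u) = \<mu>"
    unfolding P_def m_def \<mu>_def by (rule sum_marg_U_cond_expectation[OF fin])
  have "(\<Sum>u\<in>UNIV. P u * (m u - \<mu>)\<^sup>2)
      = (\<Sum>u\<in>UNIV. P u * (m u)\<^sup>2 - 2 * \<mu> * (P u * m u) + \<mu>\<^sup>2 * P u)"
    by (intro sum.cong) (simp_all add: power2_diff algebra_simps)
  also have "\<dots> = (\<Sum>u\<in>UNIV. P u * (m u)\<^sup>2) - \<mu>\<^sup>2"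
    by (simp add: sum.distrib sum_subtractf flip: sum_distrib_left)
      (simp add: total_mass total_mean power2_eq_square)
  finally have spread: "(\<Sum>u\<in>UNIV. P u * (m u - \<mu>)\<^sup>2) = (\<Sum>u\<in>UNIV. P u * (m u)\<^sup>2) - \<mu>\<^sup>2" .
  have "MMSE J = (\<Sum>u\<in>UNIV. P u * measure_pmf.expectation (cond_X J u) (\<lambda>x. x\<^sup>2))
      - (\<Sum>u\<in>UNIV. P u * (m u)\<^sup>2)"
    by (simp add: MMSE_def P_def m_def right_diff_distrib sum_subtractf)
  also have "\<dots> = measure_pmf.expectation (marg_X J) (\<lambda>x. x\<^sup>2) - (\<Sum>u\<in>UNIV. P u * (m u)\<^sup>2)"
    unfolding P_def by (simp add: sum_marg_U_cond_expectation[OF fin])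
  also have "measure_pmf.expectation (marg_X J) (\<lambda>x. x\<^sup>2) = measure_pmf.variance (marg_X J) (\<lambda>x. x) + \<mu>\<^sup>2"
    using fin by (simp add: integrable_measure_pmf_finite measure_pmf.variance_eq \<mu>_def)
  finally show ?thesis
    using spread by (simp add: P_def m_def \<mu>_def)
qed

lemma MMSE_ge_variance_minus:
  fixes J :: "('u::finite \<times> real) pmf"
  assumes fin: "finite (set_pmf (marg_X J))"
    and close: "\<And>u. u \<in> set_pmf (marg_U J) \<Longrightarrow>
      \<bar>measure_pmf.expectation (cond_X J u) (\<lambda>x. x) - measure_pmf.expectation (marg_X J) (\<lambda>x. x)\<bar> \<le> \<delta>"
  shows "MMSE J \<ge> measure_pmf.variance (marg_X J) (\<lambda>x. x) - \<delta>\<^sup>2"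
proof -
  have "(\<Sum>u\<in>UNIV. pmf (marg_U J) u
        * (measure_pmf.expectation (cond_X J u) (\<lambda>x. x)
           - measure_pmf.expectation (marg_X J) (\<lambda>x. x))\<^sup>2)
      \<le> (\<Sum>u\<in>UNIV. pmf (marg_U J) u * \<delta>\<^sup>2)"
  proof (rule sum_mono)
    fix u
    show "pmf (marg_U J) u * (measure_pmf.expectation (cond_X J u) (\<lambda>x. x)
          - measure_pmf.expectation (marg_X J) (\<lambda>x. x))\<^sup>2
        \<le> pmf (marg_U J) u * \<delta>\<^sup>2"
    proof (cases "u \<in> set_pmf (marg_U J)")
      case True
      then show ?thesis
        using close[OF True] by (intro mult_left_mono) (auto simp flip: abs_le_square_iff)
    qed (simp add: set_pmf_iff)
  qed
  also have "\<dots> = \<delta>\<^sup>2"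
    by (simp add: sum_pmf_eq_1 flip: sum_distrib_right)
  finally show ?thesis
    by (simp add: MMSE_eq_variance_minus_variance_of_cond_mean[OF fin])
qed

theorem proposition9:
  fixes J :: "('u::finite \<times> real) pmf" and x1 x2 \<epsilon> :: real
  assumes binary: "set_pmf (marg_X J) \<subseteq> {x1, x2}"
    and mean0: "measure_pmf.expectation (marg_X J) (\<lambda>x. x) = 0"
    and eps: "\<epsilon> \<ge> 0"
    and close: "\<And>u. u \<in> set_pmf (marg_U J) \<Longrightarrow> l1_dist (cond_X J u) (marg_X J) \<le> \<epsilon>"
  shows "MMSE J \<ge> measure_pmf.variance (marg_X J) (\<lambda>x. x) - 1/4 * \<epsilon>\<^sup>2 * (x1 - x2)\<^sup>2
      \<and> measure_pmf.variance (marg_X J) (\<lambda>x. x) \<le> 1/4 * (x1 - x2)\<^sup>2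
      \<and> (x1 = - x2 \<longrightarrow> measure_pmf.variance (marg_X J) (\<lambda>x. x) = 1/4 * (x1 - x2)\<^sup>2)"
proof -
  have fin: "finite (set_pmf (marg_X J))"
    using binary finite_subset by blast
  have variance: "measure_pmf.variance (marg_X J) (\<lambda>x. x) = 1/4 * (x1 - x2)\<^sup>2 - ((x1 + x2) / 2)\<^sup>2"
    using variance_two_point[OF binary] mean0 by simp
  have "\<bar>measure_pmf.expectation (cond_X J u) (\<lambda>x. x) - measure_pmf.expectation (marg_X J) (\<lambda>x. x)\<bar>
      \<le> \<bar>x1 - x2\<bar> / 2 * \<epsilon>" if u: "u \<in> set_pmf (marg_U J)" for u
  proof -
    have "set_pmf (cond_X J u) \<subseteq> {x1, x2}"
      using set_pmf_cond_X_subset[OF u] binary by blast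
    then have "\<bar>measure_pmf.expectation (cond_X J u) (\<lambda>x. x) - measure_pmf.expectation (marg_X J) (\<lambda>x. x)\<bar>
        \<le> \<bar>x1 - x2\<bar> / 2 * l1_dist (cond_X J u) (marg_X J)"
      by (rule abs_expectation_diff_le_l1_dist_two_point[OF binary])
    also have "\<dots> \<le> \<bar>x1 - x2\<bar> / 2 * \<epsilon>"
      using close[OF u] by (simp add: mult_left_mono)
    finally show ?thesis .
  qed
  then have "MMSE J \<ge> measure_pmf.variance (marg_X J) (\<lambda>x. x) - (\<bar>x1 - x2\<bar> / 2 * \<epsilon>)\<^sup>2"
    by (rule MMSE_ge_variance_minus[OF fin])
  then show ?thesis
    using variance by (simp add: power_mult_distrib power_divide mult_ac)
qed

end
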